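(* Let $m$ be a positive integer, $c$ a nonnegative integer, and $f(x)=x(e^{mx}+c)$ for $x>0$. For each positive integer $n$ and each $i\in\{0,1,2\}$, let $t_i=t_i(n)$ be the unique positive number with $f(t_i)=n+i$. Then, as $n\to\infty$, \begin{align*} t_1-t_0&=\frac{1}{mn}-\frac{1}{m^2nt_0}+O\Bigl(\frac{1}{n\log^2 n}\Bigr),\\ t_2-t_1&=\frac{1}{mn}-\frac{1}{m^2nt_0}+O\Bigl(\frac{1}{n\log^2 n}\Bigr),\\ 2t_1-t_0-t_2&=\frac{1}{mn^2}+O\Bigl(\frac{1}{n^2\log n}\Bigr),\\ \frac1{t_0}+\frac1{t_2}-\frac{2}{t_1}&=O\Bigl(\frac{1}{n^2\log^2 n}\Bigr). \end{align*} *)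

theory Defs
  imports Complex_Main "HOL-Library.Landau_Symbols"
begin

definition ff :: "nat \<Rightarrow> nat \<Rightarrow> real \<Rightarrow> real" where
  "ff m c x = x * (exp (real m * x) + real c)"

definition tt :: "nat \<Rightarrow> nat \<Rightarrow> nat \<Rightarrow> nat \<Rightarrow> real" where
  "tt m c i n = (THE t. t > 0 \<and> ff m c t = real n + real i)"

end

theory Submission
  imports Defs "HOL-Real_Asymp.Real_Asymp"
begin

(* Since ff m c t = ff 1 c (m t) / m, we have t_i(n) = G (m n + i m) / m for the inverse G of
   F s = s (e^s + c), so the four quantities are first and second differences of G and of 1 / G
   with step m at m n. Taylor's theorem and the mean value theorem for second differences express
   them through G', G'' and (1 / G)'' at intermediate points \<xi> \<ge> m n \<ge> n. These derivatives are
   explicit in s = G y, and substituting y = F s (so that ln y ~ s) turns their asymptotics into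
   expansions of explicit functions of s. The error bounds are eventually decreasing, so they
   transfer from \<xi> back to n. *)

section \<open>Second-order mean value theorems\<close>

lemma taylor_second_order:
  fixes f f' f'' :: "real \<Rightarrow> real"
  assumes "h > 0"
    and f': "\<And>z. x \<le> z \<Longrightarrow> z \<le> x + h \<Longrightarrow> (f has_real_derivative f' z) (at z)"
    and f'': "\<And>z. x \<le> z \<Longrightarrow> z \<le> x + h \<Longrightarrow> (f' has_real_derivative f'' z) (at z)"
  obtains \<xi> where "x < \<xi>" "\<xi> < x + h" "f (x + h) = f x + h * f' x + h\<^sup>2 / 2 * f'' \<xi>"
proof -
  define diff where "diff k = (if k = 0 then f else if k = 1 then f' else f'')" for k :: nat
  have "\<exists>\<xi>. x < \<xi> \<and> \<xi> < x + h \<and>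
      f (x + h) = (\<Sum>k<2. diff k x / fact k * (x + h - x) ^ k) + diff 2 \<xi> / fact 2 * (x + h - x) ^ 2"
    by (rule Taylor_up) (use assms in \<open>auto simp: diff_def less_2_cases_iff\<close>)
  then show ?thesis
    using that by (auto simp: diff_def numeral_2_eq_2 power2_eq_square)
qed

lemma second_difference_eq_deriv2:
  fixes f f' f'' :: "real \<Rightarrow> real"
  assumes "h > 0"
    and f': "\<And>z. x \<le> z \<Longrightarrow> z \<le> x + 2 * h \<Longrightarrow> (f has_real_derivative f' z) (at z)"
    and f'': "\<And>z. x \<le> z \<Longrightarrow> z \<le> x + 2 * h \<Longrightarrow> (f' has_real_derivative f'' z) (at z)"
  obtains \<xi> where "x < \<xi>" "\<xi> < x + 2 * h" "f (x + 2 * h) - 2 * f (x + h) + f x = h\<^sup>2 * f'' \<xi>"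
proof -
  have "\<exists>\<eta>. x < \<eta> \<and> \<eta> < x + h \<and>
      (f (x + h + h) - f (x + h)) - (f (x + h) - f x) = (x + h - x) * (f' (\<eta> + h) - f' \<eta>)"
  proof (rule MVT2[where f = "\<lambda>z. f (z + h) - f z"])
    fix z assume "x \<le> z" "z \<le> x + h"
    show "((\<lambda>z. f (z + h) - f z) has_real_derivative f' (z + h) - f' z) (at z)"
    proof -
      have "((\<lambda>z. f (z + h)) has_real_derivative f' (z + h)) (at z)"
        using DERIV_chain2[OF f'[of "z + h"] DERIV_add[OF DERIV_ident DERIV_const[of h]]]
          \<open>x \<le> z\<close> \<open>z \<le> x + h\<close> \<open>h > 0\<close> by simp
      then show ?thesis
        using \<open>x \<le> z\<close> \<open>z \<le> x + h\<close> \<open>h > 0\<close> by (intro DERIV_diff f') auto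
    qed
  qed (use \<open>h > 0\<close> in simp)
  then obtain \<eta> where \<eta>: "x < \<eta>" "\<eta> < x + h"
    and "f (x + h + h) - f (x + h) - (f (x + h) - f x) = h * (f' (\<eta> + h) - f' \<eta>)"
    by auto
  moreover have "x + h + h = x + 2 * h" by simp
  ultimately have diff_\<eta>: "f (x + 2 * h) - 2 * f (x + h) + f x = h * (f' (\<eta> + h) - f' \<eta>)"
    by (simp only:)
  have "\<exists>\<xi>. \<eta> < \<xi> \<and> \<xi> < \<eta> + h \<and> f' (\<eta> + h) - f' \<eta> = (\<eta> + h - \<eta>) * f'' \<xi>"
    using \<open>h > 0\<close> \<eta> by (intro MVT2 f'') auto
  then obtain \<xi> where "\<eta> < \<xi>" "\<xi> < \<eta> + h" "f' (\<eta> + h) - f' \<eta> = h * f'' \<xi>"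
    by auto
  with \<eta> diff_\<eta> show ?thesis
    by (intro that[of \<xi>]) (auto simp: power2_eq_square)
qed

lemma inverse_power_ln_antitone:
  fixes x y :: real
  assumes "1 < x" "x \<le> y"
  shows "\<bar>1 / (y ^ a * ln y ^ k)\<bar> \<le> \<bar>1 / (x ^ a * ln x ^ k)\<bar>"
proof -
  have "0 < ln x" "ln x \<le> ln y"
    using assms by auto
  then have "0 < x ^ a * ln x ^ k" "x ^ a * ln x ^ k \<le> y ^ a * ln y ^ k"
    using assms by (auto intro!: mult_mono power_mono)
  then show ?thesis
    by (simp add: frac_le)
qed

lemma bigo_compose_sequence_above:
  fixes f b :: "real \<Rightarrow> real" and \<xi> :: "nat \<Rightarrow> real"
  assumes "f \<in> O(b)"
    and "eventually (\<lambda>n. real n \<le> \<xi> n) sequentially"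
    and antitone: "\<And>x y. X \<le> x \<Longrightarrow> x \<le> y \<Longrightarrow> \<bar>b y\<bar> \<le> \<bar>b x\<bar>"
  shows "(\<lambda>n. f (\<xi> n)) \<in> O(\<lambda>n. b (real n))"
proof -
  obtain K where "0 < K" "eventually (\<lambda>x. norm (f x) \<le> K * norm (b x)) at_top"
    using landau_o.bigE[OF assms(1)] by blast
  then obtain Y where Y: "\<And>x. Y \<le> x \<Longrightarrow> \<bar>f x\<bar> \<le> K * \<bar>b x\<bar>"
    by (auto simp: eventually_at_top_linorder)
  have "eventually (\<lambda>n. max X Y \<le> real n) sequentially"
    using filterlim_real_sequentially unfolding filterlim_at_top by blast
  with assms(2) have "eventually (\<lambda>n. \<bar>f (\<xi> n)\<bar> \<le> K * \<bar>b (real n)\<bar>) sequentially"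
  proof eventually_elim
    case (elim n)
    then have "\<bar>f (\<xi> n)\<bar> \<le> K * \<bar>b (\<xi> n)\<bar>"
      by (intro Y) simp
    also have "\<dots> \<le> K * \<bar>b (real n)\<bar>"
      using elim \<open>0 < K\<close> by (intro mult_left_mono antitone) auto
    finally show ?case .
  qed
  then show ?thesis
    by (intro bigoI[of _ K]) simp
qed

lemma inverse_square_diff_le:
  fixes x \<xi> d :: real
  assumes "0 < x" "x \<le> \<xi>" "\<xi> \<le> x + d"
  shows "\<bar>1 / \<xi>\<^sup>2 - 1 / x\<^sup>2\<bar> \<le> 2 * d / x ^ 3"
proof -
  have "x\<^sup>2 \<le> \<xi>\<^sup>2"
    using assms by (intro power_mono) auto
  then have "1 / \<xi>\<^sup>2 \<le> 1 / x\<^sup>2"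
    using assms by (intro divide_left_mono) auto
  then have "\<bar>1 / \<xi>\<^sup>2 - 1 / x\<^sup>2\<bar> = 1 / x\<^sup>2 - 1 / \<xi>\<^sup>2"
    by simp
  also have "\<dots> = (\<xi> - x) * (\<xi> + x) / (\<xi>\<^sup>2 * x\<^sup>2)"
    using assms by (simp add: field_simps power2_eq_square)
  also have "\<dots> \<le> d * (2 * \<xi>) / (\<xi> * x ^ 3)"
  proof (rule frac_le)
    show "(\<xi> - x) * (\<xi> + x) \<le> d * (2 * \<xi>)"
      using assms by (intro mult_mono) auto
    have "\<xi> * x ^ 3 = \<xi> * x\<^sup>2 * x"
      by (simp add: power2_eq_square power3_eq_cube)
    also have "\<dots> \<le> \<xi> * x\<^sup>2 * \<xi>"
      using assms by (intro mult_left_mono) auto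
    finally show "\<xi> * x ^ 3 \<le> \<xi>\<^sup>2 * x\<^sup>2"
      by (simp add: power2_eq_square mult_ac)
  qed (use assms in auto)
  also have "\<dots> = 2 * d / x ^ 3"
    using assms by simp
  finally show ?thesis .
qed

section \<open>The function ff and its inverse\<close>

lemma ff_strict_mono:
  assumes "0 \<le> a" "a < b"
  shows "ff m c a < ff m c b"
proof -
  have "a * (exp (real m * a) + c) \<le> a * (exp (real m * b) + c)"
    using assms by (intro mult_left_mono) (auto simp: mult_left_mono)
  also have "\<dots> < b * (exp (real m * b) + c)"
    using assms by (intro mult_strict_right_mono) (auto intro: add_pos_nonneg)
  finally show ?thesis
    unfolding ff_def .
qed

lemma ff_ge_self: "0 \<le> t \<Longrightarrow> t \<le> ff m c t"
  unfolding ff_def by (rule mult_le_cancel_left1[THEN iffD2]) (simp add: add_increasing2)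

lemma continuous_ff: "isCont (ff m c) t"
  unfolding ff_def by (intro continuous_intros)

lemma has_real_derivative_ff:
  "(ff m c has_real_derivative exp (real m * t) * (1 + real m * t) + real c) (at t)"
  unfolding ff_def[abs_def] by (rule derivative_eq_intros refl)+ (simp add: algebra_simps)

lemma ff_one: "ff 1 c s = s * (exp s + real c)"
  by (simp add: ff_def)

definition ff_inv :: "nat \<Rightarrow> nat \<Rightarrow> real \<Rightarrow> real" where
  "ff_inv m c y = (THE t. t > 0 \<and> ff m c t = y)"

lemma tt_eq_ff_inv: "tt m c i n = ff_inv m c (real n + real i)"
  by (simp add: tt_def ff_inv_def)

lemma ff_inv_eqI:
  assumes "0 < t" "ff m c t = y"
  shows "ff_inv m c y = t"
  unfolding ff_inv_def
proof (rule the_equality)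
  fix t' assume "t' > 0 \<and> ff m c t' = y"
  then show "t' = t"
    using assms ff_strict_mono[of t t' m c] ff_strict_mono[of t' t m c]
    by (cases t t' rule: linorder_cases) auto
qed (use assms in auto)

lemma ff_inv_ff: "0 < t \<Longrightarrow> ff_inv m c (ff m c t) = t"
  by (rule ff_inv_eqI) auto

lemma
  assumes "0 < y"
  shows ff_inv_pos: "0 < ff_inv m c y" and ff_ff_inv: "ff m c (ff_inv m c y) = y"
proof -
  have "\<exists>t\<ge>0. t \<le> y \<and> ff m c t = y"
    using assms ff_ge_self[of y m c] continuous_ff by (intro IVT) (auto simp: ff_def)
  then obtain t where "0 \<le> t" "ff m c t = y"
    by blast
  moreover have "t \<noteq> 0"
    using \<open>ff m c t = y\<close> assms by (auto simp: ff_def)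
  ultimately have "0 < t" "ff_inv m c y = t"
    using ff_inv_eqI[of t m c y] by auto
  with \<open>ff m c t = y\<close> show "0 < ff_inv m c y" "ff m c (ff_inv m c y) = y"
    by auto
qed

lemma ff_inv_scale:
  assumes "0 < m" "0 < y"
  shows "ff_inv m c y = ff_inv 1 c (real m * y) / real m"
proof (rule ff_inv_eqI)
  have "0 < real m * y" using assms by simp
  from ff_inv_pos[OF this, of 1 c] ff_ff_inv[OF this, of 1 c] assms
  show "0 < ff_inv 1 c (real m * y) / real m" "ff m c (ff_inv 1 c (real m * y) / real m) = y"
    by (auto simp: ff_def)
qed

lemma filterlim_ff_inv: "filterlim (ff_inv m c) at_top at_top"
  unfolding filterlim_at_top eventually_at_top_linorder
proof (intro allI exI allI impI)
  fix Z y :: real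
  define T where "T = max Z 1"
  assume "ff m c T \<le> y"
  moreover have "1 \<le> T"
    by (simp add: T_def)
  ultimately have "0 < y"
    using ff_ge_self[of T m c] by linarith
  have "T \<le> ff_inv m c y"
  proof (rule ccontr)
    assume "\<not> T \<le> ff_inv m c y"
    then have "ff m c (ff_inv m c y) < ff m c T"
      using ff_inv_pos[OF \<open>0 < y\<close>, of m c] by (intro ff_strict_mono) auto
    then have "y < ff m c T"
      using ff_ff_inv[OF \<open>0 < y\<close>] by simp
    with \<open>ff m c T \<le> y\<close> show False by simp
  qed
  then show "Z \<le> ff_inv m c y"
    by (simp add: T_def)
qed

lemma isCont_ff_inv:
  assumes "0 < y"
  shows "isCont (ff_inv m c) y"
proof -
  define t where "t = ff_inv m c y"
  have "0 < t" "ff m c t = y"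
    using ff_inv_pos[OF assms] ff_ff_inv[OF assms] by (auto simp: t_def)
  have "isCont (ff_inv m c) (ff m c t)"
  proof (rule isCont_inverse_function2[where f = "ff m c" and g = "ff_inv m c" and a = "t / 2" and b = "t + 1"])
    fix z assume "t / 2 \<le> z" "z \<le> t + 1"
    with \<open>0 < t\<close> show "ff_inv m c (ff m c z) = z"
      by (intro ff_inv_ff) linarith
  qed (use \<open>0 < t\<close> continuous_ff in auto)
  with \<open>ff m c t = y\<close> show ?thesis by simp
qed

definition ff_inv_deriv :: "nat \<Rightarrow> nat \<Rightarrow> real \<Rightarrow> real" where
  "ff_inv_deriv m c y =
     1 / (exp (real m * ff_inv m c y) * (1 + real m * ff_inv m c y) + real c)"

definition ff_inv_deriv2 :: "nat \<Rightarrow> nat \<Rightarrow> real \<Rightarrow> real" where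
  "ff_inv_deriv2 m c y =
     - (real m * exp (real m * ff_inv m c y) * (2 + real m * ff_inv m c y))
       / (exp (real m * ff_inv m c y) * (1 + real m * ff_inv m c y) + real c) ^ 3"

lemma has_real_derivative_ff_inv:
  assumes "0 < y"
  shows "(ff_inv m c has_real_derivative ff_inv_deriv m c y) (at y)"
proof -
  define t where "t = ff_inv m c y"
  have "0 < t"
    using ff_inv_pos[OF assms] by (simp add: t_def)
  then have "0 < exp (real m * t) * (1 + real m * t) + real c"
    by (simp add: add_pos_nonneg)
  then have "(ff_inv m c has_real_derivative
      inverse (exp (real m * t) * (1 + real m * t) + real c)) (at y)"
    using assms has_real_derivative_ff[of m c t] ff_inv_pos ff_ff_inv isCont_ff_inv
    by (intro DERIV_inverse_function[where f = "ff m c" and a = 0 and b = "y + 1"])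
       (auto simp: t_def)
  then show ?thesis
    by (simp add: ff_inv_deriv_def t_def divide_inverse)
qed

lemma has_real_derivative_ff_inv_deriv:
  assumes "0 < y"
  shows "(ff_inv_deriv m c has_real_derivative ff_inv_deriv2 m c y) (at y)"
proof -
  define t where "t = ff_inv m c y"
  define P where "P = exp (real m * t) * (1 + real m * t) + real c"
  have "0 < t"
    using ff_inv_pos[OF assms] by (simp add: t_def)
  then have "0 < P"
    by (simp add: P_def add_pos_nonneg)
  have derivs: "ff_inv_deriv m c y = 1 / P"
    "ff_inv_deriv2 m c y = - (real m * exp (real m * t) * (2 + real m * t)) / P ^ 3"
    by (simp_all add: ff_inv_deriv_def ff_inv_deriv2_def P_def t_def)
  have "((\<lambda>y. exp (real m * ff_inv m c y) * (1 + real m * ff_inv m c y) + real c) has_real_derivative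
          real m * exp (real m * t) * (2 + real m * t) * ff_inv_deriv m c y) (at y)"
    unfolding t_def
    by (rule derivative_eq_intros has_real_derivative_ff_inv[OF assms] refl)+
       (simp add: algebra_simps)
  then have "((\<lambda>y. inverse (exp (real m * ff_inv m c y) * (1 + real m * ff_inv m c y) + real c))
      has_real_derivative - (real m * exp (real m * t) * (2 + real m * t) * ff_inv_deriv m c y *
        inverse ((exp (real m * ff_inv m c y) * (1 + real m * ff_inv m c y) + real c) ^ Suc (Suc 0))))
      (at y)"
    by (rule DERIV_inverse_fun) (use \<open>0 < P\<close> in \<open>simp add: P_def t_def\<close>)
  moreover have "(\<lambda>y. inverse (exp (real m * ff_inv m c y) * (1 + real m * ff_inv m c y) + real c))
      = ff_inv_deriv m c"
    by (simp add: fun_eq_iff ff_inv_deriv_def divide_inverse)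
  moreover have "- (real m * exp (real m * t) * (2 + real m * t) * ff_inv_deriv m c y *
      inverse ((exp (real m * ff_inv m c y) * (1 + real m * ff_inv m c y) + real c) ^ Suc (Suc 0)))
      = ff_inv_deriv2 m c y"
    using \<open>0 < P\<close> unfolding derivs t_def[symmetric] P_def[symmetric]
    by (simp add: field_simps power3_eq_cube)
  ultimately show ?thesis
    by (simp only:)
qed

lemma has_real_derivative_inverse_ff_inv:
  assumes "0 < y"
  shows "((\<lambda>y. 1 / ff_inv m c y) has_real_derivative - ff_inv_deriv m c y / ff_inv m c y ^ 2) (at y)"
proof -
  have "ff_inv m c y \<noteq> 0"
    using ff_inv_pos[OF assms, of m c] by simp
  show ?thesis
    by (rule derivative_eq_intros has_real_derivative_ff_inv[OF assms] refl)+
       (use \<open>ff_inv m c y \<noteq> 0\<close> in \<open>simp_all add: field_simps power2_eq_square\<close>)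
qed

lemma has_real_derivative_inverse_ff_inv_deriv:
  assumes "0 < y"
  shows "((\<lambda>y. - ff_inv_deriv m c y / ff_inv m c y ^ 2) has_real_derivative
           - ff_inv_deriv2 m c y / ff_inv m c y ^ 2 + 2 * ff_inv_deriv m c y ^ 2 / ff_inv m c y ^ 3)
         (at y)"
proof -
  have "ff_inv m c y \<noteq> 0"
    using ff_inv_pos[OF assms, of m c] by simp
  show ?thesis
    by (rule derivative_eq_intros has_real_derivative_ff_inv[OF assms]
          has_real_derivative_ff_inv_deriv[OF assms] refl)+
       (use \<open>ff_inv m c y \<noteq> 0\<close> in \<open>simp_all add: field_simps power2_eq_square power3_eq_cube\<close>)
qed

section \<open>Asymptotics of the derivatives of the inverse\<close>

text \<open>Substituting \<open>y = ff 1 c s\<close> turns estimates as \<open>y \<rightarrow> \<infinity>\<close> into estimates of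
  explicit exponential-polynomial expressions in \<open>s\<close>.\<close>

lemma bigo_compose_ff_inv:
  fixes f \<phi> \<psi> :: "real \<Rightarrow> real"
  assumes "\<phi> \<in> O(\<lambda>s. \<psi> (ff 1 c s))"
    and "\<And>y. 0 < y \<Longrightarrow> f y = \<phi> (ff_inv 1 c y)"
  shows "f \<in> O(\<psi>)"
proof -
  have "(\<lambda>y. \<phi> (ff_inv 1 c y)) \<in> O(\<lambda>y. \<psi> (ff 1 c (ff_inv 1 c y)))"
    using assms(1) filterlim_ff_inv by (rule landau_o.big.compose)
  moreover have "eventually (\<lambda>y. \<phi> (ff_inv 1 c y) = f y \<and> \<psi> (ff 1 c (ff_inv 1 c y)) = \<psi> y) at_top"
    using eventually_gt_at_top[of 0] by eventually_elim (simp add: assms(2) ff_inv_pos ff_ff_inv)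
  ultimately show ?thesis
    by (subst (asm) landau_o.big.cong_ex) (auto elim: eventually_mono)
qed

lemma ff_inv_deriv_asymptotics:
  "(\<lambda>y. ff_inv_deriv 1 c y - 1 / y + 1 / (y * ff_inv 1 c y)) \<in> O(\<lambda>y. 1 / (y * ln y ^ 2))"
proof (rule bigo_compose_ff_inv)
  show "(\<lambda>s. 1 / (exp s * (1 + s) + real c) - 1 / ff 1 c s + 1 / (ff 1 c s * s))
      \<in> O(\<lambda>s. 1 / (ff 1 c s * ln (ff 1 c s) ^ 2))"
    unfolding ff_one using of_nat_0_le_iff[of c] by real_asymp
qed (simp add: ff_inv_deriv_def ff_inv_pos ff_ff_inv mult.commute)

lemma ff_inv_deriv2_bigo: "ff_inv_deriv2 1 c \<in> O(\<lambda>y. 1 / (y * ln y ^ 2))"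
proof (rule bigo_compose_ff_inv)
  show "(\<lambda>s. - (exp s * (2 + s)) / (exp s * (1 + s) + real c) ^ 3)
      \<in> O(\<lambda>s. 1 / (ff 1 c s * ln (ff 1 c s) ^ 2))"
    unfolding ff_one using of_nat_0_le_iff[of c] by real_asymp
qed (simp add: ff_inv_deriv2_def)

lemma ff_inv_deriv2_asymptotics:
  "(\<lambda>y. ff_inv_deriv2 1 c y + 1 / y ^ 2) \<in> O(\<lambda>y. 1 / (y ^ 2 * ln y))"
proof (rule bigo_compose_ff_inv)
  show "(\<lambda>s. - (exp s * (2 + s)) / (exp s * (1 + s) + real c) ^ 3 + 1 / ff 1 c s ^ 2)
      \<in> O(\<lambda>s. 1 / (ff 1 c s ^ 2 * ln (ff 1 c s)))"
    unfolding ff_one using of_nat_0_le_iff[of c] by real_asymp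
qed (simp add: ff_inv_deriv2_def ff_inv_pos ff_ff_inv)

lemma inverse_ff_inv_deriv2_bigo:
  "(\<lambda>y. - ff_inv_deriv2 1 c y / ff_inv 1 c y ^ 2 + 2 * ff_inv_deriv 1 c y ^ 2 / ff_inv 1 c y ^ 3)
     \<in> O(\<lambda>y. 1 / (y ^ 2 * ln y ^ 2))"
proof (rule bigo_compose_ff_inv)
  show "(\<lambda>s. - (- (exp s * (2 + s)) / (exp s * (1 + s) + real c) ^ 3) / s ^ 2
        + 2 * (1 / (exp s * (1 + s) + real c)) ^ 2 / s ^ 3)
      \<in> O(\<lambda>s. 1 / (ff 1 c s ^ 2 * ln (ff 1 c s) ^ 2))"
    unfolding ff_one using of_nat_0_le_iff[of c] by real_asymp
qed (simp add: ff_inv_deriv_def ff_inv_deriv2_def)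

section \<open>The differences along the sequence\<close>

lemma real_le_real_mult: "0 < m \<Longrightarrow> real n \<le> real m * real n"
  using mult_right_mono[of 1 "real m" "real n"] by simp

lemma ff_inv_taylor_remainder_bigo:
  fixes k :: real
  assumes "0 < m" "0 < k"
  shows "(\<lambda>n. (ff_inv 1 c (real m * real n + k * real m) - ff_inv 1 c (real m * real n)) / real m
           - k * ff_inv_deriv 1 c (real m * real n)) \<in> O(\<lambda>n. 1 / (real n * ln (real n) ^ 2))"
    (is "?R \<in> _")
proof -
  have "\<exists>\<xi>. real m * real n \<le> \<xi> \<and> ?R n = k\<^sup>2 * real m / 2 * ff_inv_deriv2 1 c \<xi>" if "0 < n" for n
  proof -
    have "0 < real m * real n" "0 < k * real m"
      using assms that by simp_all
    then obtain \<xi> where "real m * real n < \<xi>" and taylor: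
      "ff_inv 1 c (real m * real n + k * real m) = ff_inv 1 c (real m * real n)
         + k * real m * ff_inv_deriv 1 c (real m * real n) + (k * real m)\<^sup>2 / 2 * ff_inv_deriv2 1 c \<xi>"
      by (elim taylor_second_order[where f = "ff_inv 1 c" and f' = "ff_inv_deriv 1 c"
          and f'' = "ff_inv_deriv2 1 c" and x = "real m * real n" and h = "k * real m"])
         (simp_all add: has_real_derivative_ff_inv has_real_derivative_ff_inv_deriv)
    with assms show ?thesis
      by (intro exI[of _ \<xi>]) (auto simp: taylor field_simps power2_eq_square)
  qed
  then obtain \<xi> where \<xi>: "\<And>n. 0 < n \<Longrightarrow>
      real m * real n \<le> \<xi> n \<and> ?R n = k\<^sup>2 * real m / 2 * ff_inv_deriv2 1 c (\<xi> n)"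
    by metis
  have "eventually (\<lambda>n. real n \<le> \<xi> n) sequentially"
    using eventually_gt_at_top[of 0]
  proof eventually_elim
    case (elim n)
    then have "real m * real n \<le> \<xi> n"
      using \<xi> by blast
    moreover have "real n \<le> real m * real n"
      using assms(1) by (rule real_le_real_mult)
    ultimately show ?case
      by linarith
  qed
  then have "(\<lambda>n. ff_inv_deriv2 1 c (\<xi> n)) \<in> O(\<lambda>n. 1 / (real n * ln (real n) ^ 2))"
  proof (rule bigo_compose_sequence_above[OF ff_inv_deriv2_bigo])
    fix x y :: real assume "2 \<le> x" "x \<le> y"
    then show "\<bar>1 / (y * ln y ^ 2)\<bar> \<le> \<bar>1 / (x * ln x ^ 2)\<bar>"
      using inverse_power_ln_antitone[of x y 1 2] by simp
  qed
  then have "(\<lambda>n. k\<^sup>2 * real m / 2 * ff_inv_deriv2 1 c (\<xi> n)) \<in> O(\<lambda>n. 1 / (real n * ln (real n) ^ 2))"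
    using assms by simp
  moreover have "eventually (\<lambda>n. k\<^sup>2 * real m / 2 * ff_inv_deriv2 1 c (\<xi> n) = ?R n) sequentially"
    using eventually_gt_at_top[of 0] by eventually_elim (use \<xi> in auto)
  ultimately show ?thesis
    by (rule landau_o.big.in_cong[THEN iffD1, rotated])
qed

lemma ff_inv_deriv_sequence_asymptotics:
  assumes "0 < m"
  shows "(\<lambda>n. ff_inv_deriv 1 c (real m * real n) - 1 / (real m * real n)
           + 1 / (real m * real n * ff_inv 1 c (real m * real n)))
         \<in> O(\<lambda>n. 1 / (real n * ln (real n) ^ 2))"
proof (rule bigo_compose_sequence_above[OF ff_inv_deriv_asymptotics])
  show "eventually (\<lambda>n. real n \<le> real m * real n) sequentially"
    using assms by (simp add: real_le_real_mult)
next
  fix x y :: real assume "2 \<le> x" "x \<le> y"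
  then show "\<bar>1 / (y * ln y ^ 2)\<bar> \<le> \<bar>1 / (x * ln x ^ 2)\<bar>"
    using inverse_power_ln_antitone[of x y 1 2] by simp
qed

lemma ff_inv_second_difference_asymptotics:
  assumes "0 < m"
  shows "(\<lambda>n. (2 * ff_inv 1 c (real m * real n + real m) - ff_inv 1 c (real m * real n)
             - ff_inv 1 c (real m * real n + 2 * real m)) / real m - 1 / (real m * real n ^ 2))
         \<in> O(\<lambda>n. 1 / (real n ^ 2 * ln (real n)))"
    (is "?R \<in> _")
proof -
  define z where "z n = real m * real n" for n
  have "\<exists>\<xi>. z n \<le> \<xi> \<and> \<xi> \<le> z n + 2 * real m \<and>
      ?R n = - real m * (ff_inv_deriv2 1 c \<xi> + 1 / \<xi>\<^sup>2) + real m * (1 / \<xi>\<^sup>2 - 1 / (z n)\<^sup>2)"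
    if "0 < n" for n
  proof -
    have "0 < z n"
      using assms that by (simp add: z_def)
    obtain \<xi> where \<xi>: "z n < \<xi>" "\<xi> < z n + 2 * real m"
      and diff: "ff_inv 1 c (z n + 2 * real m) - 2 * ff_inv 1 c (z n + real m) + ff_inv 1 c (z n)
        = (real m)\<^sup>2 * ff_inv_deriv2 1 c \<xi>"
      by (rule second_difference_eq_deriv2[where f = "ff_inv 1 c" and f' = "ff_inv_deriv 1 c"
          and f'' = "ff_inv_deriv2 1 c" and x = "z n" and h = "real m"])
         (use assms \<open>0 < z n\<close> in
           \<open>simp_all add: has_real_derivative_ff_inv has_real_derivative_ff_inv_deriv\<close>)
    have "?R n = - (ff_inv 1 c (z n + 2 * real m) - 2 * ff_inv 1 c (z n + real m) + ff_inv 1 c (z n))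
        / real m - real m / (z n)\<^sup>2"
      using assms that by (simp add: z_def field_simps power2_eq_square)
    also have "\<dots> = - real m * (ff_inv_deriv2 1 c \<xi> + 1 / \<xi>\<^sup>2) + real m * (1 / \<xi>\<^sup>2 - 1 / (z n)\<^sup>2)"
      unfolding diff using assms by (simp add: field_simps power2_eq_square)
    finally show ?thesis
      using \<xi> by (intro exI[of _ \<xi>]) simp
  qed
  then obtain \<xi> where \<xi>: "\<And>n. 0 < n \<Longrightarrow> z n \<le> \<xi> n \<and> \<xi> n \<le> z n + 2 * real m \<and>
      ?R n = - real m * (ff_inv_deriv2 1 c (\<xi> n) + 1 / (\<xi> n)\<^sup>2)
        + real m * (1 / (\<xi> n)\<^sup>2 - 1 / (z n)\<^sup>2)"
    by metis
  have "eventually (\<lambda>n. real n \<le> \<xi> n) sequentially"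
    using eventually_gt_at_top[of 0]
  proof eventually_elim
    case (elim n)
    have "real n \<le> z n"
      using assms by (simp add: z_def real_le_real_mult)
    with \<xi>[OF elim] show ?case
      by linarith
  qed
  then have "(\<lambda>n. ff_inv_deriv2 1 c (\<xi> n) + 1 / (\<xi> n)\<^sup>2) \<in> O(\<lambda>n. 1 / (real n ^ 2 * ln (real n)))"
  proof (rule bigo_compose_sequence_above[OF ff_inv_deriv2_asymptotics])
    fix x y :: real assume "2 \<le> x" "x \<le> y"
    then show "\<bar>1 / (y ^ 2 * ln y)\<bar> \<le> \<bar>1 / (x ^ 2 * ln x)\<bar>"
      using inverse_power_ln_antitone[of x y 2 1] by simp
  qed
  then have main: "(\<lambda>n. - real m * (ff_inv_deriv2 1 c (\<xi> n) + 1 / (\<xi> n)\<^sup>2))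
      \<in> O(\<lambda>n. 1 / (real n ^ 2 * ln (real n)))"
    using assms by simp
  txt \<open>The main term is taken at \<open>\<xi> n\<close> instead of \<open>z n\<close>; the discrepancy is \<open>O(1/n\<^sup>3)\<close>.\<close>
  have "(\<lambda>n. real m * (1 / (\<xi> n)\<^sup>2 - 1 / (z n)\<^sup>2)) \<in> O(\<lambda>n. 1 / real n ^ 3)"
  proof (rule bigoI)
    show "eventually (\<lambda>n. norm (real m * (1 / (\<xi> n)\<^sup>2 - 1 / (z n)\<^sup>2)) \<le> 4 * norm (1 / real n ^ 3))
        sequentially"
      using eventually_gt_at_top[of 0]
    proof eventually_elim
      case (elim n)
      have "0 < z n"
        using assms elim by (simp add: z_def)
      then have "\<bar>1 / (\<xi> n)\<^sup>2 - 1 / (z n)\<^sup>2\<bar> \<le> 2 * (2 * real m) / z n ^ 3"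
        using \<xi>[OF elim] by (intro inverse_square_diff_le) auto
      then have "real m * \<bar>1 / (\<xi> n)\<^sup>2 - 1 / (z n)\<^sup>2\<bar> \<le> real m * (4 * real m / z n ^ 3)"
        by (intro mult_left_mono) auto
      also have "\<dots> = 4 / (real m * real n ^ 3)"
        using assms by (simp add: z_def field_simps power3_eq_cube)
      also have "\<dots> \<le> 4 / real n ^ 3"
        using assms elim real_le_real_mult[of m 1] by (intro divide_left_mono) auto
      finally show ?case
        by (simp add: abs_mult)
    qed
  qed
  also have "(\<lambda>n. 1 / real n ^ 3) \<in> O(\<lambda>n. 1 / (real n ^ 2 * ln (real n)))"
    by real_asymp
  finally have "(\<lambda>n. real m * (1 / (\<xi> n)\<^sup>2 - 1 / (z n)\<^sup>2)) \<in> O(\<lambda>n. 1 / (real n ^ 2 * ln (real n)))" .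
  with main have "(\<lambda>n. - real m * (ff_inv_deriv2 1 c (\<xi> n) + 1 / (\<xi> n)\<^sup>2)
      + real m * (1 / (\<xi> n)\<^sup>2 - 1 / (z n)\<^sup>2)) \<in> O(\<lambda>n. 1 / (real n ^ 2 * ln (real n)))"
    by (rule sum_in_bigo)
  moreover have "eventually (\<lambda>n. - real m * (ff_inv_deriv2 1 c (\<xi> n) + 1 / (\<xi> n)\<^sup>2)
      + real m * (1 / (\<xi> n)\<^sup>2 - 1 / (z n)\<^sup>2) = ?R n) sequentially"
    using eventually_gt_at_top[of 0] by eventually_elim (use \<xi> in auto)
  ultimately show ?thesis
    by (rule landau_o.big.in_cong[THEN iffD1, rotated])
qed

lemma inverse_ff_inv_second_difference_bigo:
  assumes "0 < m"
  shows "(\<lambda>n. 1 / ff_inv 1 c (real m * real n) + 1 / ff_inv 1 c (real m * real n + 2 * real m)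
             - 2 / ff_inv 1 c (real m * real n + real m))
         \<in> O(\<lambda>n. 1 / (real n ^ 2 * ln (real n) ^ 2))"
    (is "?R \<in> _")
proof -
  define H where "H y = - ff_inv_deriv2 1 c y / ff_inv 1 c y ^ 2 + 2 * ff_inv_deriv 1 c y ^ 2 / ff_inv 1 c y ^ 3"
    for y
  have "\<exists>\<xi>. real m * real n \<le> \<xi> \<and> ?R n = (real m)\<^sup>2 * H \<xi>" if "0 < n" for n
  proof -
    have "0 < real m * real n"
      using assms that by simp
    have "0 < real m"
      using assms by simp
    moreover have "((\<lambda>y. 1 / ff_inv 1 c y) has_real_derivative - ff_inv_deriv 1 c z / ff_inv 1 c z ^ 2) (at z)"
      "((\<lambda>y. - ff_inv_deriv 1 c y / ff_inv 1 c y ^ 2) has_real_derivative H z) (at z)"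
      if "real m * real n \<le> z" "z \<le> real m * real n + 2 * real m" for z
      using that \<open>0 < real m * real n\<close> unfolding H_def
      by (intro has_real_derivative_inverse_ff_inv has_real_derivative_inverse_ff_inv_deriv; linarith)+
    ultimately obtain \<xi> where "real m * real n < \<xi>"
      and "1 / ff_inv 1 c (real m * real n + 2 * real m) - 2 * (1 / ff_inv 1 c (real m * real n + real m))
          + 1 / ff_inv 1 c (real m * real n) = (real m)\<^sup>2 * H \<xi>"
      by (rule second_difference_eq_deriv2)
    then show ?thesis
      by (intro exI[of _ \<xi>]) auto
  qed
  then obtain \<xi> where \<xi>: "\<And>n. 0 < n \<Longrightarrow> real m * real n \<le> \<xi> n \<and> ?R n = (real m)\<^sup>2 * H (\<xi> n)"
    by metis
  have H_bigo: "H \<in> O(\<lambda>y. 1 / (y ^ 2 * ln y ^ 2))"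
    using inverse_ff_inv_deriv2_bigo unfolding H_def .
  have "eventually (\<lambda>n. real n \<le> \<xi> n) sequentially"
    using eventually_gt_at_top[of 0]
  proof eventually_elim
    case (elim n)
    have "real n \<le> real m * real n"
      using assms by (rule real_le_real_mult)
    with \<xi>[OF elim] show ?case
      by linarith
  qed
  then have "(\<lambda>n. H (\<xi> n)) \<in> O(\<lambda>n. 1 / (real n ^ 2 * ln (real n) ^ 2))"
  proof (rule bigo_compose_sequence_above[OF H_bigo])
    fix x y :: real assume "2 \<le> x" "x \<le> y"
    then show "\<bar>1 / (y ^ 2 * ln y ^ 2)\<bar> \<le> \<bar>1 / (x ^ 2 * ln x ^ 2)\<bar>"
      using inverse_power_ln_antitone[of x y 2 2] by simp
  qed
  then have "(\<lambda>n. (real m)\<^sup>2 * H (\<xi> n)) \<in> O(\<lambda>n. 1 / (real n ^ 2 * ln (real n) ^ 2))"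
    using assms by simp
  moreover have "eventually (\<lambda>n. (real m)\<^sup>2 * H (\<xi> n) = ?R n) sequentially"
    using eventually_gt_at_top[of 0] by eventually_elim (use \<xi> in auto)
  ultimately show ?thesis
    by (rule landau_o.big.in_cong[THEN iffD1, rotated])
qed

theorem lemma5:
  fixes m c :: nat
  assumes "m > 0"
  defines "t0 \<equiv> tt m c 0" and "t1 \<equiv> tt m c 1" and "t2 \<equiv> tt m c 2"
  shows "((\<lambda>n. (t1 n - t0 n) - (1 / (real m * real n) - 1 / ((real m)^2 * real n * t0 n)))
           \<in> O(\<lambda>n. 1 / (real n * (ln (real n))^2))) \<and>
         ((\<lambda>n. (t2 n - t1 n) - (1 / (real m * real n) - 1 / ((real m)^2 * real n * t0 n)))
           \<in> O(\<lambda>n. 1 / (real n * (ln (real n))^2))) \<and>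
         ((\<lambda>n. (2 * t1 n - t0 n - t2 n) - 1 / (real m * (real n)^2))
           \<in> O(\<lambda>n. 1 / ((real n)^2 * ln (real n)))) \<and>
         ((\<lambda>n. 1 / t0 n + 1 / t2 n - 2 / t1 n)
           \<in> O(\<lambda>n. 1 / ((real n)^2 * (ln (real n))^2)))"
proof -
  let ?G = "ff_inv 1 c" and ?z = "\<lambda>n. real m * real n"
  txt \<open>Only eventually: \<open>t0 0\<close> is a junk value, as \<open>ff m c t = 0\<close> has no positive root.\<close>
  have t_eq: "eventually (\<lambda>n. 0 < n \<and> 0 < ?G (?z n) \<and> t0 n = ?G (?z n) / real m
      \<and> t1 n = ?G (?z n + real m) / real m \<and> t2 n = ?G (?z n + 2 * real m) / real m) sequentially"
    using eventually_gt_at_top[of 0]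
    by eventually_elim
       (use assms in \<open>simp add: t0_def t1_def t2_def tt_eq_ff_inv ff_inv_scale[OF assms(1)]
          ff_inv_pos ff_ff_inv distrib_left mult.commute\<close>)
  have "real m \<noteq> 0"
    using assms by simp
  note taylor1 = ff_inv_taylor_remainder_bigo[OF assms(1) zero_less_one, where c = c]
    and taylor2 = ff_inv_taylor_remainder_bigo[OF assms(1) zero_less_two, where c = c]
    and deriv = ff_inv_deriv_sequence_asymptotics[OF assms(1), where c = c]
  have "(\<lambda>n. (t1 n - t0 n) - (1 / (real m * real n) - 1 / ((real m)^2 * real n * t0 n)))
      \<in> O(\<lambda>n. 1 / (real n * (ln (real n))^2))"
    by (rule landau_o.big.in_cong[THEN iffD1, OF _ sum_in_bigo(1)[OF taylor1 deriv]])
       (use t_eq in \<open>eventually_elim, elim conjE, simp only:,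
          use assms(1) in \<open>simp add: field_simps power2_eq_square\<close>\<close>)
  moreover have "(\<lambda>n. (t2 n - t1 n) - (1 / (real m * real n) - 1 / ((real m)^2 * real n * t0 n)))
      \<in> O(\<lambda>n. 1 / (real n * (ln (real n))^2))"
    by (rule landau_o.big.in_cong[THEN iffD1,
          OF _ sum_in_bigo(1)[OF sum_in_bigo(2)[OF taylor2 taylor1] deriv]])
       (use t_eq in \<open>eventually_elim, elim conjE, simp only:,
          use assms(1) in \<open>simp add: field_simps power2_eq_square\<close>\<close>)
  moreover have "(\<lambda>n. (2 * t1 n - t0 n - t2 n) - 1 / (real m * (real n)^2))
      \<in> O(\<lambda>n. 1 / ((real n)^2 * ln (real n)))"
    by (rule landau_o.big.in_cong[THEN iffD1,
          OF _ ff_inv_second_difference_asymptotics[OF assms(1), where c = c]])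
       (use t_eq in \<open>eventually_elim, elim conjE, simp only:,
          use assms(1) in \<open>simp add: field_simps power2_eq_square\<close>\<close>)
  moreover have "(\<lambda>n. 1 / t0 n + 1 / t2 n - 2 / t1 n) \<in> O(\<lambda>n. 1 / ((real n)^2 * (ln (real n))^2))"
    by (rule landau_o.big.in_cong[THEN iffD1, OF _ landau_o.big.cmult_in_iff[THEN iffD2,
          OF \<open>real m \<noteq> 0\<close> inverse_ff_inv_second_difference_bigo[OF assms(1), where c = c]]])
       (use t_eq in \<open>eventually_elim, elim conjE, simp only:,
          use assms(1) in \<open>simp add: field_simps power2_eq_square\<close>\<close>)
  ultimately show ?thesis
    by blast
qed

end
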